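(* Let $(R,\mathfrak m)$ be a Noetherian local ring of prime characteristic $p$ with $\operatorname{depth} R=0$, and let $L_\bullet$ be a complex of finitely generated free $R$-modules whose differentials, written as matrices with respect to bases, have all entries in $\mathfrak m$. Then for every integer $r$ with $r>\log_p c(R)$ and every integer $j$, $$H_j(L_\bullet\otimes_R {}^{\phi^r}\!R)=0 \iff L_j=0.$$ Consequently, if $M$ is a finitely generated $R$-module such that $\operatorname{Tor}^R_j(M,{}^{\phi^r}\!R)=0$ for some $j\ge 1$ and some $r>\log_p c(R)$, then $M$ is projective.
   Context: $\phi:R\to R$ denotes the Frobenius homomorphism $\phi(a)=a^p$. For $r\ge 1$, ${}^{\phi^r}\!R$ denotes the ring $R$ regarded as an $R$-module via $\phi^r$, i.e. $a\cdot b=a^{p^r}b$. For a local ring $(R,\mathfrak m)$ of depth zero, $c(R)$ is the smallest positive integer $s$ such that $(0:\mathfrak m)_R=\{x\in R\mid \mathfrak m x=0\}\not\subseteq \mathfrak m^s$ (such $s$ exists since $(0:\mathfrak m)_R\neq 0$ and by Krull's intersection theorem). *)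

theory Defs
  imports "HOL-Analysis.Analysis" "HOL-Computational_Algebra.Primes"
begin

section \<open>Ideals of a commutative ring (the ring is the whole type 'a)\<close>

definition ideal :: "'a::comm_ring_1 set \<Rightarrow> bool" where
  "ideal I \<longleftrightarrow> module.subspace ((*) :: 'a \<Rightarrow> 'a \<Rightarrow> 'a) I"

definition ideal_span :: "'a::comm_ring_1 set \<Rightarrow> 'a set" where
  "ideal_span S = module.span ((*) :: 'a \<Rightarrow> 'a \<Rightarrow> 'a) S"

definition noetherian_ring :: "'a::comm_ring_1 itself \<Rightarrow> bool" where
  "noetherian_ring _ \<longleftrightarrow> (\<forall>I::'a set. ideal I \<longrightarrow> (\<exists>S. finite S \<and> I = ideal_span S))"

definition local_ring_max :: "'a::comm_ring_1 set \<Rightarrow> bool" where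
  "local_ring_max m \<longleftrightarrow> ideal m \<and> m \<noteq> UNIV \<and>
     (\<forall>I. ideal I \<and> I \<noteq> UNIV \<longrightarrow> I \<subseteq> m)"

definition ideal_pow :: "'a::comm_ring_1 set \<Rightarrow> nat \<Rightarrow> 'a set" where
  "ideal_pow I s = ideal_span {(\<Prod>i<s. f i) | f. \<forall>i<s. f i \<in> I}"

text \<open>depth R = 0: there is no R-regular element in m (every element of m is a zero divisor).\<close>
definition depth_zero :: "'a::comm_ring_1 set \<Rightarrow> bool" where
  "depth_zero m \<longleftrightarrow> (\<forall>x\<in>m. \<exists>y. y \<noteq> 0 \<and> x * y = 0)"

definition socle :: "'a::comm_ring_1 set \<Rightarrow> 'a set" where
  "socle m = {x. \<forall>y\<in>m. y * x = 0}"

definition cR :: "'a::comm_ring_1 set \<Rightarrow> nat" where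
  "cR m = (LEAST s. s > 0 \<and> \<not> socle m \<subseteq> ideal_pow m s)"

text \<open>R^n: coordinate vectors nat => 'a vanishing from index n on.\<close>
definition vecs :: "nat \<Rightarrow> (nat \<Rightarrow> 'a::comm_ring_1) set" where
  "vecs n = {v. \<forall>k\<ge>n. v k = 0}"

definition mat_app :: "nat \<Rightarrow> nat \<Rightarrow> (nat \<Rightarrow> nat \<Rightarrow> 'a::comm_ring_1) \<Rightarrow> (nat \<Rightarrow> 'a) \<Rightarrow> (nat \<Rightarrow> 'a)" where
  "mat_app m n A v = (\<lambda>i. if i < m then (\<Sum>k<n. A i k * v k) else 0)"

text \<open>Base change along phi^r: tensoring the map R^n -> R^m given by A with the module
  {}^{phi^r}R gives the map R^n -> R^m with matrix (A i k ^ (p^r)).\<close>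
definition frob_mat :: "nat \<Rightarrow> nat \<Rightarrow> (nat \<Rightarrow> nat \<Rightarrow> 'a::comm_ring_1) \<Rightarrow> (nat \<Rightarrow> nat \<Rightarrow> 'a)" where
  "frob_mat p r A = (\<lambda>i k. A i k ^ (p ^ r))"

text \<open>A complex L of finite free modules indexed by integers: L_j = R^(rk j),
  differential d j : L_j -> L_(j-1) given by an rk(j-1) x rk j matrix.\<close>
definition free_complex :: "(int \<Rightarrow> nat) \<Rightarrow> (int \<Rightarrow> nat \<Rightarrow> nat \<Rightarrow> 'a::comm_ring_1) \<Rightarrow> bool" where
  "free_complex rk d \<longleftrightarrow> (\<forall>j. \<forall>v\<in>vecs (rk j).
      mat_app (rk (j - 2)) (rk (j - 1)) (d (j - 1)) (mat_app (rk (j - 1)) (rk j) (d j) v) = (\<lambda>_. 0))"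

definition minimal_complex :: "'a::comm_ring_1 set \<Rightarrow> (int \<Rightarrow> nat) \<Rightarrow> (int \<Rightarrow> nat \<Rightarrow> nat \<Rightarrow> 'a) \<Rightarrow> bool" where
  "minimal_complex m rk d \<longleftrightarrow> (\<forall>j i k. i < rk (j - 1) \<longrightarrow> k < rk j \<longrightarrow> d j i k \<in> m)"

definition frob_homology_zero ::
  "nat \<Rightarrow> nat \<Rightarrow> (int \<Rightarrow> nat) \<Rightarrow> (int \<Rightarrow> nat \<Rightarrow> nat \<Rightarrow> 'a::comm_ring_1) \<Rightarrow> int \<Rightarrow> bool" where
  "frob_homology_zero p r rk d j \<longleftrightarrow>
     (\<forall>v\<in>vecs (rk j). mat_app (rk (j - 1)) (rk j) (frob_mat p r (d j)) v = (\<lambda>_. 0) \<longrightarrow>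
        (\<exists>w\<in>vecs (rk (j + 1)). mat_app (rk j) (rk (j + 1)) (frob_mat p r (d (j + 1))) w = v))"

definition fin_gen_module :: "('a::comm_ring_1 \<Rightarrow> 'm::ab_group_add \<Rightarrow> 'm) \<Rightarrow> bool" where
  "fin_gen_module smul \<longleftrightarrow> module smul \<and> (\<exists>S. finite S \<and> module.span smul S = UNIV)"

text \<open>Free resolution of M by finite free modules F_i = R^(rk i) (i >= 0):
  d i : F_i -> F_(i-1) (i >= 1) is an rk(i-1) x rk i matrix, the augmentation
  F_0 -> M sends the k-th basis vector to g k.\<close>
definition free_resolution ::
  "('a::comm_ring_1 \<Rightarrow> 'm::ab_group_add \<Rightarrow> 'm) \<Rightarrow> (nat \<Rightarrow> nat) \<Rightarrow> (nat \<Rightarrow> nat \<Rightarrow> nat \<Rightarrow> 'a) \<Rightarrow> (nat \<Rightarrow> 'm) \<Rightarrow> bool" where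
  "free_resolution smul rk d g \<longleftrightarrow>
     (\<forall>x. \<exists>v\<in>vecs (rk 0). (\<Sum>k<rk 0. smul (v k) (g k)) = x) \<and>
     (\<forall>v\<in>vecs (rk 0). (\<Sum>k<rk 0. smul (v k) (g k)) = 0 \<longleftrightarrow>
        (\<exists>w\<in>vecs (rk 1). mat_app (rk 0) (rk 1) (d 1) w = v)) \<and>
     (\<forall>i\<ge>1. \<forall>v\<in>vecs (rk i). mat_app (rk (i - 1)) (rk i) (d i) v = (\<lambda>_. 0) \<longleftrightarrow>
        (\<exists>w\<in>vecs (rk (i + 1)). mat_app (rk i) (rk (i + 1)) (d (i + 1)) w = v))"

text \<open>Tor_j^R(M, {}^{phi^r}R) = 0 (j >= 1), computed as H_j(F tensor {}^{phi^r}R) for a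
  free resolution F of M (independent of the resolution).\<close>
definition tor_frob_zero :: "('a::comm_ring_1 \<Rightarrow> 'm::ab_group_add \<Rightarrow> 'm) \<Rightarrow> nat \<Rightarrow> nat \<Rightarrow> nat \<Rightarrow> bool" where
  "tor_frob_zero smul p r j \<longleftrightarrow> (\<exists>rk d g. free_resolution smul rk d g \<and>
     (\<forall>v\<in>vecs (rk j). mat_app (rk (j - 1)) (rk j) (frob_mat p r (d j)) v = (\<lambda>_. 0) \<longrightarrow>
        (\<exists>w\<in>vecs (rk (j + 1)). mat_app (rk j) (rk (j + 1)) (frob_mat p r (d (j + 1))) w = v)))"

text \<open>M is projective: M is a direct summand of a free module, namely the canonical
  surjection from the free module on the elements of M onto M splits R-linearly.\<close>
definition projective_module :: "('a::comm_ring_1 \<Rightarrow> 'm::ab_group_add \<Rightarrow> 'm) \<Rightarrow> bool" where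
  "projective_module smul \<longleftrightarrow> (\<exists>s :: 'm \<Rightarrow> 'm \<Rightarrow> 'a.
     (\<forall>x y. s (x + y) = (\<lambda>z. s x z + s y z)) \<and> (\<forall>a x. s (smul a x) = (\<lambda>y. a * s x y)) \<and>
     (\<forall>x. finite {y. s x y \<noteq> 0}) \<and>
     (\<forall>x. (\<Sum>y\<in>{y. s x y \<noteq> 0}. smul (s x y) y) = x))"

end

theory Submission
  imports Defs "HOL-Library.Function_Algebras"
begin

(* For q = p^r > c(R) some socle element x lies outside m^q. If the complex twisted by phi^r
   is exact at L_j and v is a cycle of L modulo m, then x v^[q] is a twisted cycle, hence a
   twisted boundary; for any functional mu vanishing modulo m on the boundaries of L this
   puts x (mu v)^q into m^q, so mu v is not a unit. Thus L/mL is exact at L_j, and a minimal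
   L must have L_j = 0. For a free resolution F of M, exactness of F/mF at F_j lets Gaussian
   elimination over the local ring split d_j. Depth zero pushes the splitting down to d_1:
   a vector killed by the nonzero socle element x has all its coordinates in m. So M is a
   direct summand of F_0. *)

section \<open>Ideals, local rings and Noetherian rings\<close>

interpretation rmod: module "(*) :: 'a::comm_ring_1 \<Rightarrow> 'a \<Rightarrow> 'a"
  by standard (simp_all add: algebra_simps)

declare rmod.scale_scale [simp del] \<comment> \<open>it loops against \<open>mult.assoc\<close>\<close>

lemma ideal_iff:
  "ideal I \<longleftrightarrow> 0 \<in> I \<and> (\<forall>x\<in>I. \<forall>y\<in>I. x + y \<in> I) \<and> (\<forall>c. \<forall>x\<in>I. c * x \<in> I)"
  by (simp add: ideal_def rmod.subspace_def)

lemma idealI: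
  "0 \<in> I \<Longrightarrow> (\<And>x y. x \<in> I \<Longrightarrow> y \<in> I \<Longrightarrow> x + y \<in> I) \<Longrightarrow> (\<And>c x. x \<in> I \<Longrightarrow> c * x \<in> I)
    \<Longrightarrow> ideal I"
  by (simp add: ideal_iff)

lemma ideal_0: "ideal I \<Longrightarrow> 0 \<in> I"
  by (simp add: ideal_iff)

lemma ideal_add: "ideal I \<Longrightarrow> x \<in> I \<Longrightarrow> y \<in> I \<Longrightarrow> x + y \<in> I"
  by (simp add: ideal_iff)

lemma ideal_mult_left: "ideal I \<Longrightarrow> x \<in> I \<Longrightarrow> c * x \<in> I"
  by (simp add: ideal_iff)

lemma ideal_mult_right: "ideal I \<Longrightarrow> x \<in> I \<Longrightarrow> x * c \<in> I"
  by (metis ideal_mult_left mult.commute)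

lemma ideal_diff: "ideal I \<Longrightarrow> x \<in> I \<Longrightarrow> y \<in> I \<Longrightarrow> x - y \<in> I"
  unfolding ideal_def by (rule rmod.subspace_diff)

lemma ideal_sum: "ideal I \<Longrightarrow> (\<And>x. x \<in> A \<Longrightarrow> f x \<in> I) \<Longrightarrow> sum f A \<in> I"
  unfolding ideal_def by (rule rmod.subspace_sum)

lemma ideal_prod:
  assumes "ideal I" "finite A" "a \<in> A" "f a \<in> I"
  shows "prod f A \<in> I"
proof -
  have "prod f A = f a * prod f (A - {a})"
    using assms(2,3) by (rule prod.remove)
  then show ?thesis
    using assms(1,4) by (simp add: ideal_mult_right)
qed

lemma ideal_power_mono:
  assumes "ideal I" "s ^ k \<in> I" "k \<le> n"
  shows "s ^ n \<in> I"
proof -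
  have "s ^ n = s ^ k * s ^ (n - k)"
    using assms(3) by (simp flip: power_add)
  then show ?thesis
    using assms(1,2) by (simp add: ideal_mult_right)
qed

lemma ideal_span_ideal: "ideal (ideal_span S)"
  by (simp add: ideal_def ideal_span_def)

lemma ideal_span_superset: "S \<subseteq> ideal_span S"
  by (simp add: ideal_span_def rmod.span_superset)

lemma ideal_span_minimal: "ideal I \<Longrightarrow> S \<subseteq> I \<Longrightarrow> ideal_span S \<subseteq> I"
  by (simp add: ideal_def ideal_span_def rmod.span_minimal)

lemma ideal_span_mono: "S \<subseteq> T \<Longrightarrow> ideal_span S \<subseteq> ideal_span T"
  by (simp add: ideal_span_def rmod.span_mono)

lemma ideal_span_finite: "finite S \<Longrightarrow> ideal_span S = range (\<lambda>u. \<Sum>v\<in>S. u v * v)"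
  by (simp add: ideal_span_def rmod.span_finite)

lemma local_ring_max_ideal: "local_ring_max m \<Longrightarrow> ideal m"
  by (simp add: local_ring_max_def)

lemma local_ring_max_one:
  assumes "local_ring_max m"
  shows "1 \<notin> m"
proof
  assume "1 \<in> m"
  then have "c \<in> m" for c
    using ideal_mult_left[of m 1 c] assms by (simp add: local_ring_max_def)
  then show False
    using assms by (auto simp: local_ring_max_def)
qed

lemma local_ring_max_unit:
  assumes "local_ring_max m" "x \<notin> m"
  shows "\<exists>u. u * x = 1"
proof (rule ccontr)
  assume "\<nexists>u. u * x = 1"
  then have "1 \<notin> ideal_span {x}"
    by (auto simp: ideal_span_finite eq_commute[of 1])
  then have "ideal_span {x} \<subseteq> m"
    using assms(1) ideal_span_ideal unfolding local_ring_max_def by blast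
  then show False
    using assms(2) ideal_span_superset by blast
qed

lemma ideal_Union_chain:
  assumes "C \<noteq> {}" "subset.chain F C" "\<And>I. I \<in> F \<Longrightarrow> ideal I"
  shows "ideal (\<Union>C)"
proof (rule idealI)
  have ideals: "\<And>I. I \<in> C \<Longrightarrow> ideal I"
    using assms(2,3) unfolding subset.chain_def by blast
  then show "0 \<in> \<Union>C"
    using assms(1) ideal_0 by blast
  show "c * x \<in> \<Union>C" if "x \<in> \<Union>C" for c x
    using that ideals ideal_mult_left by blast
  fix x y assume "x \<in> \<Union>C" "y \<in> \<Union>C"
  then obtain X Y where "X \<in> C" "Y \<in> C" "x \<in> X" "y \<in> Y"
    by blast
  with assms(2) obtain Z where "Z \<in> C" "x \<in> Z" "y \<in> Z"
    unfolding subset.chain_def by blast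
  then show "x + y \<in> \<Union>C"
    using ideals ideal_add by blast
qed

lemma noetherian_ring_maximal_element:
  fixes F :: "'a::comm_ring_1 set set"
  assumes "noetherian_ring TYPE('a)" "F \<noteq> {}" "\<And>I. I \<in> F \<Longrightarrow> ideal I"
  shows "\<exists>M\<in>F. \<forall>I\<in>F. M \<subseteq> I \<longrightarrow> I = M"
proof (rule subset_Zorn_nonempty[OF assms(2)])
  fix C assume C: "C \<noteq> {}" "subset.chain F C"
  then have CF: "C \<subseteq> F"
    unfolding subset.chain_def by blast
  obtain S where S: "finite S" "\<Union>C = ideal_span S"
    using assms(1) ideal_Union_chain[OF C assms(3)] unfolding noetherian_ring_def by blast
  then have "S \<subseteq> \<Union>C"
    using ideal_span_superset by blast
  then obtain X where X: "X \<in> C" "S \<subseteq> X"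
    by (rule finite_subset_Union_chain[OF S(1) _ C])
  then have "ideal_span S \<subseteq> X"
    using CF assms(3) ideal_span_minimal by blast
  then have "\<Union>C = X"
    using S(2) X(1) by blast
  then show "\<Union>C \<in> F"
    using X CF by blast
qed

section \<open>Depth zero: the socle is nonzero\<close>

definition annihilator :: "'a::comm_ring_1 \<Rightarrow> 'a set" where
  "annihilator y = {a. a * y = 0}"

definition prime_ideal :: "'a::comm_ring_1 set \<Rightarrow> bool" where
  "prime_ideal P \<longleftrightarrow> ideal P \<and> 1 \<notin> P \<and> (\<forall>a b. a * b \<in> P \<longrightarrow> a \<in> P \<or> b \<in> P)"

definition maximal_annihilator :: "'a::comm_ring_1 set \<Rightarrow> bool" where
  "maximal_annihilator P \<longleftrightarrow>
     (\<exists>y. y \<noteq> 0 \<and> P = annihilator y) \<and> (\<forall>y. y \<noteq> 0 \<and> P \<subseteq> annihilator y \<longrightarrow> annihilator y = P)"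

lemma ideal_annihilator: "ideal (annihilator y)"
  unfolding annihilator_def by (rule idealI) (auto simp: distrib_right mult.assoc)

lemma prime_ideal_prod:
  assumes "prime_ideal P" "finite A" "prod f A \<in> P"
  shows "\<exists>a\<in>A. f a \<in> P"
  using assms(2,3)
proof (induction A rule: finite_induct)
  case empty
  then show ?case
    using assms(1) by (simp add: prime_ideal_def)
next
  case (insert a A)
  then have "f a * prod f A \<in> P"
    by simp
  then have "f a \<in> P \<or> prod f A \<in> P"
    using assms(1) by (simp add: prime_ideal_def)
  then show ?case
    using insert.IH by blast
qed

lemma prime_ideal_contains_factor:
  assumes "prime_ideal P" "finite T" "\<And>t. t \<in> T \<Longrightarrow> ideal (J t)" "(\<Inter>t\<in>T. J t) \<subseteq> P"
  shows "\<exists>t\<in>T. J t \<subseteq> P"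
proof (rule ccontr)
  assume "\<not> ?thesis"
  then have "\<forall>t\<in>T. \<exists>a. a \<in> J t \<and> a \<notin> P"
    by blast
  then obtain g where g: "\<And>t. t \<in> T \<Longrightarrow> g t \<in> J t \<and> g t \<notin> P"
    by (metis bchoice)
  have "prod g T \<in> J t" if "t \<in> T" for t
    using ideal_prod[OF assms(3)[OF that] assms(2) that] g that by blast
  then have "prod g T \<in> P"
    using assms(4) by blast
  then show False
    using prime_ideal_prod[OF assms(1,2)] g by blast
qed

lemma maximal_annihilator_prime:
  assumes "maximal_annihilator P"
  shows "prime_ideal P"
proof -
  obtain y where y: "y \<noteq> 0" "P = annihilator y"
    and maximal: "\<And>z. z \<noteq> 0 \<Longrightarrow> P \<subseteq> annihilator z \<Longrightarrow> annihilator z = P"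
    using assms unfolding maximal_annihilator_def by blast
  have "a \<in> P \<or> b \<in> P" if ab: "a * b \<in> P" for a b
  proof (rule disjCI)
    assume "b \<notin> P"
    then have "b * y \<noteq> 0"
      using y by (simp add: annihilator_def)
    moreover have "P \<subseteq> annihilator (b * y)"
    proof
      fix a assume "a \<in> P"
      then have "a * y = 0"
        using y by (simp add: annihilator_def)
      then show "a \<in> annihilator (b * y)"
        using mult.left_commute[of a b y] by (simp add: annihilator_def)
    qed
    ultimately have "annihilator (b * y) = P"
      by (rule maximal)
    moreover have "a \<in> annihilator (b * y)"
      using ab y by (simp add: annihilator_def mult.assoc)
    ultimately show "a \<in> P"
      by blast
  qed
  moreover have "1 \<notin> P"
    using y by (simp add: annihilator_def)
  ultimately show ?thesis
    using y ideal_annihilator unfolding prime_ideal_def by blast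
qed

lemma zero_divisor_in_maximal_annihilator:
  fixes y :: "'a::comm_ring_1"
  assumes "noetherian_ring TYPE('a)" "z * y = 0" "y \<noteq> 0"
  shows "\<exists>P. maximal_annihilator P \<and> z \<in> P"
proof -
  let ?F = "{annihilator w | w. w \<noteq> 0 \<and> annihilator y \<subseteq> annihilator w}"
  have "?F \<noteq> {}" "\<And>I. I \<in> ?F \<Longrightarrow> ideal I"
    using assms(3) ideal_annihilator by blast+
  then have "\<exists>M\<in>?F. \<forall>I\<in>?F. M \<subseteq> I \<longrightarrow> I = M"
    by (rule noetherian_ring_maximal_element[OF assms(1)])
  then obtain M where "M \<in> ?F" and M_max: "\<forall>I\<in>?F. M \<subseteq> I \<longrightarrow> I = M"
    by (rule bexE)
  then obtain w where w: "w \<noteq> 0" "annihilator y \<subseteq> M" "M = annihilator w"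
    by blast
  have "maximal_annihilator M"
    unfolding maximal_annihilator_def
  proof (intro conjI allI impI)
    fix v assume "v \<noteq> 0 \<and> M \<subseteq> annihilator v"
    then show "annihilator v = M"
      using M_max w(2) by blast
  qed (use w in blast)
  moreover have "z \<in> M"
    using assms(2) w(2) by (auto simp: annihilator_def)
  ultimately show ?thesis
    by blast
qed

lemma maximal_annihilator_in_generators:
  assumes "maximal_annihilator (annihilator w)" "w \<noteq> 0" "finite T" "w \<in> ideal_span T"
    and "\<And>t. t \<in> T \<Longrightarrow> maximal_annihilator (annihilator t)"
  shows "annihilator w \<in> annihilator ` T"
proof -
  obtain u where u: "w = (\<Sum>t\<in>T. u t * t)"
    using assms(3,4) ideal_span_finite by blast
  have "(\<Inter>t\<in>T. annihilator t) \<subseteq> annihilator w"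
  proof
    fix a assume "a \<in> (\<Inter>t\<in>T. annihilator t)"
    then have "\<forall>t\<in>T. u t * (a * t) = 0"
      by (simp add: annihilator_def)
    moreover have "a * w = (\<Sum>t\<in>T. u t * (a * t))"
      unfolding u sum_distrib_left by (rule sum.cong) (simp_all add: mult.left_commute)
    ultimately show "a \<in> annihilator w"
      by (simp add: annihilator_def)
  qed
  then have "\<exists>t\<in>T. annihilator t \<subseteq> annihilator w"
    by (rule prime_ideal_contains_factor[OF maximal_annihilator_prime[OF assms(1)] assms(3)
          ideal_annihilator])
  then obtain t where t: "t \<in> T" "annihilator t \<subseteq> annihilator w"
    by (rule bexE)
  then have "annihilator w = annihilator t"
    using assms(2,5) unfolding maximal_annihilator_def by blast
  then show ?thesis
    using t(1) by simp
qed

text \<open>The span of a finite set \<open>T\<close> of elements with maximal annihilator can be chosen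
  maximal; then every maximal annihilator is some \<open>annihilator t\<close>, \<open>t \<in> T\<close>.\<close>
lemma finite_maximal_annihilators:
  assumes "noetherian_ring TYPE('a::comm_ring_1)"
  shows "finite {P :: 'a set. maximal_annihilator P}"
proof -
  define W where "W = {y::'a. y \<noteq> 0 \<and> maximal_annihilator (annihilator y)}"
  let ?G = "{ideal_span T | T. finite T \<and> T \<subseteq> W}"
  have "?G \<noteq> {}" "\<And>I. I \<in> ?G \<Longrightarrow> ideal I"
    using ideal_span_ideal by blast+
  then have "\<exists>M\<in>?G. \<forall>I\<in>?G. M \<subseteq> I \<longrightarrow> I = M"
    by (rule noetherian_ring_maximal_element[OF assms])
  then obtain M where "M \<in> ?G" and M_max: "\<forall>I\<in>?G. M \<subseteq> I \<longrightarrow> I = M"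
    by (rule bexE)
  then obtain T where T: "finite T" "T \<subseteq> W" "M = ideal_span T"
    by blast
  have W_span: "W \<subseteq> ideal_span T"
  proof
    fix w assume "w \<in> W"
    then have "ideal_span (insert w T) \<in> ?G"
      using T(1,2) by blast
    moreover have "M \<subseteq> ideal_span (insert w T)"
      using T(3) ideal_span_mono[of T "insert w T"] by blast
    ultimately have "ideal_span (insert w T) = M"
      by (rule M_max[rule_format])
    then show "w \<in> ideal_span T"
      using T(3) ideal_span_superset[of "insert w T"] by blast
  qed
  have "{P. maximal_annihilator P} \<subseteq> annihilator ` T"
  proof
    fix P :: "'a set" assume "P \<in> {P. maximal_annihilator P}"
    then obtain w where w: "w \<noteq> 0" "P = annihilator w" "maximal_annihilator P"
      unfolding maximal_annihilator_def by auto
    then have "w \<in> ideal_span T"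
      using W_span W_def by blast
    then show "P \<in> annihilator ` T"
      using maximal_annihilator_in_generators[OF _ w(1) T(1)] w T(2) W_def by blast
  qed
  then show ?thesis
    by (rule finite_surj[OF T(1)])
qed

text \<open>Choose \<open>g P \<in> I\<close> outside all members of \<open>F\<close> but \<open>P\<close>. For \<open>P1 \<noteq> P0\<close> in \<open>F\<close>, the
  element \<open>g P0 + \<Prod>P\<in>F-{P0}. g P\<close> of \<open>I\<close> would lie in no member of \<open>F\<close>.\<close>
lemma prime_avoidance_irredundant:
  assumes "\<forall>P\<in>F. prime_ideal P" "finite F" "ideal I" "I \<subseteq> \<Union>F"
    and irredundant: "\<And>P. P \<in> F \<Longrightarrow> \<not> I \<subseteq> \<Union>(F - {P})" and "P0 \<in> F"
  shows "F = {P0}"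
proof (rule ccontr)
  assume "F \<noteq> {P0}"
  then obtain P1 where P1: "P1 \<in> F - {P0}"
    using assms(6) by blast
  have "\<forall>P\<in>F. \<exists>a. a \<in> I \<and> a \<notin> \<Union>(F - {P})"
    using irredundant by blast
  then obtain g where g: "\<And>P. P \<in> F \<Longrightarrow> g P \<in> I \<and> g P \<notin> \<Union>(F - {P})"
    by (metis bchoice)
  have g_mem: "g P \<in> P" if "P \<in> F" for P
    using g[OF that] assms(4) by blast
  define others where "others = F - {P0}"
  have fin: "finite others"
    using assms(2) by (simp add: others_def)
  have "prod g others \<in> I"
    using ideal_prod[OF assms(3) fin] g P1 others_def by blast
  then have "g P0 + prod g others \<in> I"
    using g[OF assms(6)] ideal_add assms(3) by blast
  then obtain Q where Q: "Q \<in> F" "g P0 + prod g others \<in> Q"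
    using assms(4) by blast
  then have Q_prime: "prime_ideal Q"
    using assms(1) by blast
  then have Q_ideal: "ideal Q"
    by (simp add: prime_ideal_def)
  show False
  proof (cases "Q = P0")
    case True
    have "prod g others = (g P0 + prod g others) - g P0"
      by simp
    also have "\<dots> \<in> Q"
      using Q True g_mem[OF assms(6)] ideal_diff[OF Q_ideal] by blast
    finally obtain P where "P \<in> others" "g P \<in> Q"
      using prime_ideal_prod[OF Q_prime fin] by blast
    then show False
      using g True Q(1) unfolding others_def by blast
  next
    case False
    then have "Q \<in> others"
      using Q(1) by (simp add: others_def)
    then have "prod g others \<in> Q"
      using ideal_prod[OF Q_ideal fin] g_mem others_def by blast
    then have "g P0 \<in> Q"
      using Q(2) ideal_diff[OF Q_ideal] by fastforce
    then show False
      using g[OF assms(6)] \<open>Q \<in> others\<close> unfolding others_def by blast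
  qed
qed

lemma prime_avoidance:
  assumes "finite F" "\<forall>P\<in>F. prime_ideal P" "ideal I" "I \<subseteq> \<Union>F"
  shows "\<exists>P\<in>F. I \<subseteq> P"
  using assms
proof (induction "card F" arbitrary: F rule: less_induct)
  case less
  show ?case
  proof (cases "\<exists>P\<in>F. I \<subseteq> \<Union>(F - {P})")
    case True
    then obtain P where P: "P \<in> F" "I \<subseteq> \<Union>(F - {P})"
      by blast
    have "card (F - {P}) < card F"
      using less.prems(1) P(1) by (rule card_Diff1_less)
    then have "\<exists>Q\<in>F - {P}. I \<subseteq> Q"
      using less P by auto
    then show ?thesis
      by blast
  next
    case False
    obtain P0 where "P0 \<in> F"
      using less.prems(3,4) ideal_0 by blast
    then have "F = {P0}"
      using prime_avoidance_irredundant[OF less.prems(2,1,3,4)] False by blast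
    then show ?thesis
      using less.prems(4) by blast
  qed
qed

lemma depth_zero_socle_nonzero:
  fixes m :: "'a::comm_ring_1 set"
  assumes "noetherian_ring TYPE('a)" "local_ring_max m" "depth_zero m"
  shows "\<exists>y. y \<noteq> 0 \<and> y \<in> socle m"
proof -
  let ?F = "{P :: 'a set. maximal_annihilator P}"
  have "m \<subseteq> \<Union>?F"
  proof
    fix a assume "a \<in> m"
    then obtain y where "y \<noteq> 0" "a * y = 0"
      using assms(3) unfolding depth_zero_def by blast
    then show "a \<in> \<Union>?F"
      using zero_divisor_in_maximal_annihilator[OF assms(1)] by blast
  qed
  then have "\<exists>P\<in>?F. m \<subseteq> P"
    using prime_avoidance finite_maximal_annihilators[OF assms(1)] maximal_annihilator_prime
      local_ring_max_ideal[OF assms(2)] by blast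
  then obtain y where "y \<noteq> 0" "m \<subseteq> annihilator y"
    unfolding maximal_annihilator_def by blast
  then show ?thesis
    unfolding socle_def annihilator_def by blast
qed

section \<open>Powers of an ideal and the invariant \<open>cR\<close>\<close>

lemma ideal_pow_ideal: "ideal (ideal_pow I s)"
  unfolding ideal_pow_def by (rule ideal_span_ideal)

lemma prod_mem_ideal_pow: "(\<And>i. i < s \<Longrightarrow> f i \<in> I) \<Longrightarrow> (\<Prod>i<s. f i) \<in> ideal_pow I s"
  unfolding ideal_pow_def by (rule subsetD[OF ideal_span_superset]) blast

lemma power_mem_ideal_pow: "a \<in> I \<Longrightarrow> a ^ s \<in> ideal_pow I s"
  using prod_mem_ideal_pow[of s "\<lambda>_. a" I] by simp

lemma ideal_pow_Suc_subset: "ideal_pow I (Suc s) \<subseteq> ideal_pow I s"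
  unfolding ideal_pow_def[of I "Suc s"]
proof (rule ideal_span_minimal[OF ideal_pow_ideal], safe)
  fix f assume "\<forall>i<Suc s. f i \<in> I"
  then have "(\<Prod>i<s. f i) \<in> ideal_pow I s"
    by (intro prod_mem_ideal_pow) simp
  then show "(\<Prod>i<Suc s. f i) \<in> ideal_pow I s"
    by (simp add: ideal_mult_right[OF ideal_pow_ideal])
qed

lemma ideal_pow_antimono: "s \<le> t \<Longrightarrow> ideal_pow I t \<subseteq> ideal_pow I s"
  by (induction t rule: dec_induct) (use ideal_pow_Suc_subset in blast)+

lemma ideal_pow_span_subset:
  assumes "finite S" "ideal Q" "\<And>f. (\<forall>i<N. f i \<in> S) \<Longrightarrow> (\<Prod>i<N. f i) \<in> Q"
  shows "ideal_pow (ideal_span S) N \<subseteq> Q"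
  unfolding ideal_pow_def
proof (rule ideal_span_minimal[OF assms(2)], safe)
  fix f assume "\<forall>i<N. f i \<in> ideal_span S"
  then have "\<forall>i<N. \<exists>u. f i = (\<Sum>s\<in>S. u s * s)"
    unfolding ideal_span_finite[OF assms(1)] image_iff by blast
  then obtain U where U: "\<And>i. i < N \<Longrightarrow> f i = (\<Sum>s\<in>S. U i s * s)"
    by metis
  have "(\<Prod>i<N. f i) = (\<Prod>i<N. \<Sum>s\<in>S. U i s * s)"
    by (rule prod.cong) (simp_all add: U)
  also have "\<dots> = (\<Sum>g\<in>PiE {..<N} (\<lambda>_. S). \<Prod>i<N. U i (g i) * g i)"
    by (rule prod_sum_PiE[OF finite_lessThan assms(1)])
  also have "\<dots> \<in> Q"
  proof (rule ideal_sum[OF assms(2)])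
    fix g assume g: "g \<in> PiE {..<N} (\<lambda>_. S)"
    have "\<forall>i<N. g i \<in> S"
      using PiE_mem[OF g] by blast
    then have "(\<Prod>i<N. g i) \<in> Q"
      by (rule assms(3))
    then have "(\<Prod>i<N. U i (g i)) * (\<Prod>i<N. g i) \<in> Q"
      by (rule ideal_mult_left[OF assms(2)])
    then show "(\<Prod>i<N. U i (g i) * g i) \<in> Q"
      by (simp only: prod.distrib)
  qed
  finally show "(\<Prod>i<N. f i) \<in> Q" .
qed

lemma prod_mem_by_pigeonhole:
  assumes "finite S" "ideal Q" "\<And>s. s \<in> S \<Longrightarrow> s ^ K \<in> Q"
    and "\<forall>i<N. f i \<in> S" "card S * K < N"
  shows "(\<Prod>i<N. f i) \<in> Q"
proof -
  define fiber where "fiber s = {i. i < N \<and> f i = s}" for s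
  have f_range: "f ` {..<N} \<subseteq> S"
    using assms(4) by auto
  have "(\<Sum>s\<in>S. card (fiber s)) = N"
    using sum.group[OF finite_lessThan assms(1) f_range, of "\<lambda>_. 1::nat"]
    by (simp add: fiber_def)
  then obtain s where s: "s \<in> S" "K \<le> card (fiber s)"
    using sum_bounded_above[of S "\<lambda>s. card (fiber s)" K] assms(5) by force
  have "(\<Prod>i<N. f i) = (\<Prod>t\<in>S. \<Prod>i\<in>fiber t. f i)"
    using prod.group[OF finite_lessThan assms(1) f_range, of f] by (simp add: fiber_def)
  also have "\<dots> = (\<Prod>t\<in>S. t ^ card (fiber t))"
    by (rule prod.cong) (simp_all add: fiber_def)
  also have "\<dots> \<in> Q"
    using ideal_prod[OF assms(2,1) s(1)] ideal_power_mono[OF assms(2) assms(3)[OF s(1)] s(2)]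
    by simp
  finally show ?thesis .
qed

lemma noetherian_colon_power_stable:
  fixes a :: "'a::comm_ring_1"
  assumes "noetherian_ring TYPE('a)" "ideal Q"
  obtains k where "\<And>b. b * a ^ Suc k \<in> Q \<Longrightarrow> b * a ^ k \<in> Q"
proof -
  define colon where "colon k = {b. b * a ^ k \<in> Q}" for k
  have colon_ideal: "ideal (colon k)" for k
    unfolding colon_def
    by (rule idealI) (auto simp: distrib_right ideal_0 ideal_add assms(2) mult.assoc
        intro: ideal_mult_left[OF assms(2)])
  have colon_mono: "colon k \<subseteq> colon (Suc k)" for k
  proof
    fix b assume "b \<in> colon k"
    then have "b * a ^ k * a \<in> Q"
      unfolding colon_def by (simp add: ideal_mult_right[OF assms(2)])
    then show "b \<in> colon (Suc k)"
      unfolding colon_def by (simp only: mem_Collect_eq power_Suc2 mult.assoc)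
  qed
  have "range colon \<noteq> {}" "\<And>I. I \<in> range colon \<Longrightarrow> ideal I"
    using colon_ideal by auto
  then have "\<exists>M\<in>range colon. \<forall>I\<in>range colon. M \<subseteq> I \<longrightarrow> I = M"
    by (rule noetherian_ring_maximal_element[OF assms(1)])
  then obtain k where k_max: "\<And>I. I \<in> range colon \<Longrightarrow> colon k \<subseteq> I \<Longrightarrow> I = colon k"
    by blast
  have "colon (Suc k) = colon k"
    by (rule k_max) (simp_all add: colon_mono)
  then show thesis
    using that[of k] unfolding colon_def by blast
qed

text \<open>Let \<open>k\<close> be where the colon ideals \<open>Q : a ^ k\<close> stabilise. If \<open>a ^ k \<notin> Q\<close>, maximality
  gives \<open>y = q + b a ^ k\<close> with \<open>q \<in> Q\<close>; then \<open>a y = 0\<close> yields \<open>b a ^ Suc k \<in> Q\<close>, hence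
  \<open>b a ^ k \<in> Q\<close> and \<open>y \<in> Q\<close>.\<close>
lemma power_mem_maximal_avoiding:
  fixes y :: "'a::comm_ring_1"
  assumes "noetherian_ring TYPE('a)" "ideal Q" "y \<notin> Q"
    and Q_max: "\<And>J. ideal J \<Longrightarrow> Q \<subseteq> J \<Longrightarrow> y \<notin> J \<Longrightarrow> J = Q"
    and "a * y = 0"
  shows "\<exists>k. a ^ k \<in> Q"
proof (rule ccontr)
  assume no_power: "\<nexists>k. a ^ k \<in> Q"
  obtain k where k: "\<And>b. b * a ^ Suc k \<in> Q \<Longrightarrow> b * a ^ k \<in> Q"
    using noetherian_colon_power_stable[OF assms(1,2)] by blast
  define J where "J = ideal_span (insert (a ^ k) Q)"
  have J: "ideal J" "Q \<subseteq> J" "a ^ k \<in> J"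
    unfolding J_def using ideal_span_ideal ideal_span_superset[of "insert (a ^ k) Q"] by blast+
  have "y \<in> J"
  proof (rule ccontr)
    assume "y \<notin> J"
    then have "J = Q"
      using Q_max J(1,2) by blast
    then show False
      using J(3) no_power by blast
  qed
  moreover have "rmod.span Q = Q"
    using assms(2) by (simp add: ideal_def)
  ultimately obtain b where b: "y - b * a ^ k \<in> Q"
    unfolding J_def ideal_span_def rmod.span_insert by auto
  then have "a * (y - b * a ^ k) \<in> Q"
    by (rule ideal_mult_left[OF assms(2)])
  then have "- (b * a ^ Suc k) \<in> Q"
    using assms(5) by (simp add: algebra_simps)
  then have "b * a ^ k \<in> Q"
    using k ideal_mult_left[OF assms(2), of _ "-1"] by force
  then have "y \<in> Q"
    using b ideal_add[OF assms(2)] by fastforce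
  then show False
    using assms(3) by blast
qed

text \<open>Every generator of \<open>m\<close> is nilpotent modulo an ideal \<open>Q\<close> maximal among those
  avoiding \<open>y\<close>, so some power of \<open>m\<close> lies in \<open>Q\<close>.\<close>
lemma socle_not_in_ideal_pow:
  fixes m :: "'a::comm_ring_1 set"
  assumes "noetherian_ring TYPE('a)" "ideal m" "y \<noteq> 0" "y \<in> socle m"
  shows "\<exists>s>0. y \<notin> ideal_pow m s"
proof -
  let ?F = "{I. ideal I \<and> y \<notin> I}"
  have "?F \<noteq> {}" "\<And>I. I \<in> ?F \<Longrightarrow> ideal I"
    using assms(3) by (auto intro!: exI[of _ "{0}"] idealI)
  then have "\<exists>Q\<in>?F. \<forall>I\<in>?F. Q \<subseteq> I \<longrightarrow> I = Q"
    by (rule noetherian_ring_maximal_element[OF assms(1)])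
  then obtain Q where Q: "ideal Q" "y \<notin> Q" and Q_max: "\<forall>I\<in>?F. Q \<subseteq> I \<longrightarrow> I = Q"
    by blast
  obtain S where S: "finite S" "m = ideal_span S"
    using assms(1,2) unfolding noetherian_ring_def by blast
  have "\<forall>s\<in>S. \<exists>k. s ^ k \<in> Q"
  proof
    fix s assume "s \<in> S"
    then have "s * y = 0"
      using assms(4) S(2) ideal_span_superset unfolding socle_def by blast
    then show "\<exists>k. s ^ k \<in> Q"
      using power_mem_maximal_avoiding[OF assms(1) Q] Q_max by blast
  qed
  then obtain k where k: "\<And>s. s \<in> S \<Longrightarrow> s ^ k s \<in> Q"
    by metis
  define K where "K = (\<Sum>s\<in>S. k s)"
  have K: "s ^ K \<in> Q" if "s \<in> S" for s
    using ideal_power_mono[OF Q(1) k[OF that]] member_le_sum[OF that _ S(1), of k]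
    by (simp add: K_def)
  have "(\<Prod>i<card S * K + 1. f i) \<in> Q" if "\<forall>i<card S * K + 1. f i \<in> S" for f
    by (rule prod_mem_by_pigeonhole[OF S(1) Q(1) K that less_add_one])
  then have "ideal_pow m (card S * K + 1) \<subseteq> Q"
    unfolding S(2) by (rule ideal_pow_span_subset[OF S(1) Q(1)])
  then show ?thesis
    using Q(2) by (intro exI[of _ "card S * K + 1"]) auto
qed

lemma cR_witness:
  fixes m :: "'a::comm_ring_1 set"
  assumes "noetherian_ring TYPE('a)" "local_ring_max m" "depth_zero m"
  shows "0 < cR m" "\<exists>x\<in>socle m. x \<notin> ideal_pow m (cR m)"
proof -
  obtain y where "y \<noteq> 0" "y \<in> socle m"
    using depth_zero_socle_nonzero[OF assms] by blast
  then obtain s where "s > 0" "y \<notin> ideal_pow m s"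
    using socle_not_in_ideal_pow[OF assms(1) local_ring_max_ideal[OF assms(2)]] by blast
  then have "\<exists>s. 0 < s \<and> \<not> socle m \<subseteq> ideal_pow m s"
    using \<open>y \<in> socle m\<close> by blast
  then have "0 < cR m \<and> \<not> socle m \<subseteq> ideal_pow m (cR m)"
    unfolding cR_def by (rule LeastI_ex)
  then show "0 < cR m" "\<exists>x\<in>socle m. x \<notin> ideal_pow m (cR m)"
    by blast+
qed

lemma frobenius_socle_witness:
  fixes m :: "'a::comm_ring_1 set"
  assumes "noetherian_ring TYPE('a)" "local_ring_max m" "depth_zero m" "prime p"
    and "real r > log (real p) (real (cR m))"
  obtains x where "x \<in> socle m" "x \<notin> ideal_pow m (p ^ r)"
proof -
  obtain x where x: "x \<in> socle m" "x \<notin> ideal_pow m (cR m)"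
    using cR_witness[OF assms(1-3)] by blast
  have "1 < real p"
    using prime_gt_1_nat[OF assms(4)] by simp
  then have "log (real p) (real (cR m)) < log (real p) (real (p ^ r))"
    using assms(5) by (simp add: log_pow_cancel)
  then have "cR m \<le> p ^ r"
    using \<open>1 < real p\<close> cR_witness(1)[OF assms(1-3)] by (subst (asm) log_less_cancel_iff) auto
  then show ?thesis
    using that x ideal_pow_antimono by blast
qed

section \<open>Linear algebra over a local ring\<close>

definition vscale :: "'a::comm_ring_1 \<Rightarrow> (nat \<Rightarrow> 'a) \<Rightarrow> nat \<Rightarrow> 'a" where
  "vscale c v = (\<lambda>k. c * v k)"

lemma vscale_apply [simp]: "vscale c v k = c * v k"
  by (simp add: vscale_def)

interpretation vec: module "vscale :: 'a::comm_ring_1 \<Rightarrow> (nat \<Rightarrow> 'a) \<Rightarrow> nat \<Rightarrow> 'a"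
  by standard (simp_all add: fun_eq_iff algebra_simps)

abbreviation vec_linear :: "((nat \<Rightarrow> 'a::comm_ring_1) \<Rightarrow> nat \<Rightarrow> 'a) \<Rightarrow> bool" where
  "vec_linear f \<equiv> module_hom vscale vscale f"

abbreviation vec_functional :: "((nat \<Rightarrow> 'a::comm_ring_1) \<Rightarrow> 'a) \<Rightarrow> bool" where
  "vec_functional f \<equiv> module_hom vscale (*) f"

lemma vec_linear_iff:
  "vec_linear f \<longleftrightarrow> (\<forall>v w. f (v + w) = f v + f w) \<and> (\<forall>c v. f (vscale c v) = vscale c (f v))"
  by (simp add: module_hom_iff vec.module_axioms)

lemma vec_functional_iff:
  "vec_functional f \<longleftrightarrow> (\<forall>v w. f (v + w) = f v + f w) \<and> (\<forall>c v. f (vscale c v) = c * f v)"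
  by (simp add: module_hom_iff vec.module_axioms rmod.module_axioms)

lemma vec_linear_comp: "vec_linear f \<Longrightarrow> vec_linear g \<Longrightarrow> vec_linear (\<lambda>v. f (g v))"
  by (simp add: vec_linear_iff)

lemma vec_functional_comp: "vec_functional f \<Longrightarrow> vec_linear g \<Longrightarrow> vec_functional (\<lambda>v. f (g v))"
  by (simp add: vec_linear_iff vec_functional_iff)

lemma vec_functional_coord: "vec_functional (\<lambda>v. v k)"
  by (simp add: vec_functional_iff)

lemma vec_linear_rank_one: "vec_functional f \<Longrightarrow> vec_linear (\<lambda>v. vscale (f v) b)"
  by (simp add: vec_linear_iff vec_functional_iff fun_eq_iff algebra_simps)

lemma vec_linear_zero: "vec_linear (\<lambda>v. 0)"
  by (simp add: vec_linear_iff fun_eq_iff)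

lemma vec_linear_add: "vec_linear f \<Longrightarrow> vec_linear g \<Longrightarrow> vec_linear (\<lambda>v. f v + g v)"
  by (simp add: vec_linear_iff fun_eq_iff algebra_simps)

lemma vec_linear_diff: "vec_linear f \<Longrightarrow> vec_linear g \<Longrightarrow> vec_linear (\<lambda>v. f v - g v)"
  by (simp add: vec_linear_iff fun_eq_iff algebra_simps)

definition basis_vec :: "nat \<Rightarrow> nat \<Rightarrow> 'a::comm_ring_1" where
  "basis_vec i = (\<lambda>k. if k = i then 1 else 0)"

definition vecs_on :: "nat set \<Rightarrow> (nat \<Rightarrow> 'a::comm_ring_1) set" where
  "vecs_on I = {v. \<forall>k. k \<notin> I \<longrightarrow> v k = 0}"

lemma vecs_eq_vecs_on: "vecs n = vecs_on {..<n}"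
  by (auto simp: vecs_def vecs_on_def)

lemma vecs_on_add: "v \<in> vecs_on I \<Longrightarrow> w \<in> vecs_on I \<Longrightarrow> v + w \<in> vecs_on I"
  by (simp add: vecs_on_def)

lemma vecs_on_diff: "v \<in> vecs_on I \<Longrightarrow> w \<in> vecs_on I \<Longrightarrow> v - w \<in> vecs_on I"
  by (simp add: vecs_on_def)

lemma vecs_on_vscale: "v \<in> vecs_on I \<Longrightarrow> vscale c v \<in> vecs_on I"
  by (simp add: vecs_on_def)

lemma vecs_on_mono: "I \<subseteq> I' \<Longrightarrow> v \<in> vecs_on I \<Longrightarrow> v \<in> vecs_on I'"
  by (auto simp: vecs_on_def)

lemma basis_vec_in_vecs_on: "i \<in> I \<Longrightarrow> basis_vec i \<in> vecs_on I"
  by (simp add: vecs_on_def basis_vec_def)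

lemma vecs_on_empty: "vecs_on {} = {0}"
  by (auto simp: vecs_on_def)

lemma vecs_on_expansion:
  assumes "finite I" "v \<in> vecs_on I"
  shows "v = (\<Sum>i\<in>I. vscale (v i) (basis_vec i))"
proof
  fix k
  have "(\<Sum>i\<in>I. vscale (v i) (basis_vec i)) k = (\<Sum>i\<in>I. if i = k then v k else 0)"
    by (induction I rule: infinite_finite_induct) (auto simp: basis_vec_def)
  also have "\<dots> = v k"
    using assms by (auto simp: vecs_on_def)
  finally show "v k = (\<Sum>i\<in>I. vscale (v i) (basis_vec i)) k" ..
qed

lemma vec_functional_expansion:
  assumes "finite I" "vec_functional \<mu>" "v \<in> vecs_on I"
  shows "\<mu> v = (\<Sum>i\<in>I. \<mu> (basis_vec i) * v i)"
proof -
  interpret module_hom vscale "(*)" \<mu>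
    by (rule assms(2))
  have "\<mu> v = \<mu> (\<Sum>i\<in>I. vscale (v i) (basis_vec i))"
    using vecs_on_expansion[OF assms(1,3)] by simp
  then show ?thesis
    by (simp add: sum scale mult.commute)
qed

definition pivot_elim :: "'a::comm_ring_1 \<Rightarrow> nat \<Rightarrow> (nat \<Rightarrow> 'a) \<Rightarrow> (nat \<Rightarrow> 'a) \<Rightarrow> nat \<Rightarrow> 'a" where
  "pivot_elim u k b y = y - vscale (u * y k) b"

lemma vec_linear_pivot_elim: "vec_linear (pivot_elim u k b)"
  by (simp add: vec_linear_iff pivot_elim_def fun_eq_iff algebra_simps)

lemma pivot_elim_pivot: "u * b k = 1 \<Longrightarrow> pivot_elim u k b b = 0"
  by (simp add: pivot_elim_def fun_eq_iff mult.commute)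

lemma pivot_elim_coord: "u * b k = 1 \<Longrightarrow> pivot_elim u k b y k = 0"
  by (simp add: pivot_elim_def) (metis mult.commute mult.left_commute mult_1_right)

lemma pivot_elim_id: "y k = 0 \<Longrightarrow> pivot_elim u k b y = y"
  by (simp add: pivot_elim_def fun_eq_iff)

lemma pivot_elim_vecs_on:
  assumes "u * b k = 1" "y \<in> vecs_on I" "b \<in> vecs_on I"
  shows "pivot_elim u k b y \<in> vecs_on (I - {k})"
  using assms pivot_elim_coord[of u b k y] by (auto simp: vecs_on_def pivot_elim_def)

definition vec_complex ::
  "nat set \<Rightarrow> ((nat \<Rightarrow> 'a::comm_ring_1) \<Rightarrow> nat \<Rightarrow> 'a) \<Rightarrow> nat set \<Rightarrow> ((nat \<Rightarrow> 'a) \<Rightarrow> nat \<Rightarrow> 'a) \<Rightarrow> bool"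
  where "vec_complex J A I B \<longleftrightarrow>
    vec_linear A \<and> vec_linear B \<and> (\<forall>w\<in>vecs_on J. A w \<in> vecs_on I \<and> B (A w) = 0)"

text \<open>Exactness at \<open>R^I\<close> of \<open>R^J \<rightarrow> R^I \<rightarrow> R^\<nat>\<close> (maps \<open>A\<close>, \<open>B\<close>) after reduction modulo \<open>m\<close>, in
  dual form: if \<open>B v\<close> vanishes modulo \<open>m\<close>, then every functional vanishing modulo \<open>m\<close> on
  the image of \<open>A\<close> vanishes modulo \<open>m\<close> on \<open>v\<close>; that is, \<open>v \<in> A(R^J) + m R^I\<close>.\<close>
definition residually_exact ::
  "'a::comm_ring_1 set \<Rightarrow> nat set \<Rightarrow> ((nat \<Rightarrow> 'a) \<Rightarrow> nat \<Rightarrow> 'a) \<Rightarrow> nat set \<Rightarrow> ((nat \<Rightarrow> 'a) \<Rightarrow> nat \<Rightarrow> 'a) \<Rightarrow> bool"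
  where "residually_exact m J A I B \<longleftrightarrow>
    (\<forall>v\<in>vecs_on I. \<forall>\<mu>. vec_functional \<mu> \<and> (\<forall>k. B v k \<in> m) \<and> (\<forall>l\<in>J. \<mu> (A (basis_vec l)) \<in> m)
      \<longrightarrow> \<mu> v \<in> m)"

definition has_inner_inverse :: "nat set \<Rightarrow> ((nat \<Rightarrow> 'a::comm_ring_1) \<Rightarrow> nat \<Rightarrow> 'a) \<Rightarrow> bool" where
  "has_inner_inverse I B \<longleftrightarrow>
    (\<exists>h. vec_linear h \<and> (\<forall>y. h y \<in> vecs_on I) \<and> (\<forall>v\<in>vecs_on I. B (h (B v)) = B v))"

lemma residually_exactD:
  "residually_exact m J A I B \<Longrightarrow> v \<in> vecs_on I \<Longrightarrow> vec_functional \<mu> \<Longrightarrow> \<forall>k. B v k \<in> m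
    \<Longrightarrow> (\<And>l. l \<in> J \<Longrightarrow> \<mu> (A (basis_vec l)) \<in> m) \<Longrightarrow> \<mu> v \<in> m"
  unfolding residually_exact_def by blast

lemma residually_exact_residues_zero:
  assumes "1 \<notin> m" "residually_exact m J A I B"
    and "\<forall>i\<in>I. \<forall>k. B (basis_vec i) k \<in> m" "\<forall>l\<in>J. \<forall>i\<in>I. A (basis_vec l) i \<in> m"
  shows "I = {}"
proof (rule ccontr)
  assume "I \<noteq> {}"
  then obtain i where i: "i \<in> I"
    by blast
  have "(\<lambda>v. v i) (basis_vec i) \<in> m"
    using assms(3,4) i
    by (intro residually_exactD[OF assms(2) basis_vec_in_vecs_on vec_functional_coord]) auto
  then show False
    using assms(1) by (simp add: basis_vec_def)
qed

lemma has_inner_inverse_empty: "has_inner_inverse {} B"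
  unfolding has_inner_inverse_def using vec_linear_zero vecs_on_empty by fastforce

lemma pivot_incoming_invisible:
  assumes "vec_complex J A I B" "l \<in> J"
  shows "B (pivot_elim u k (A (basis_vec l)) y) = B y"
proof -
  interpret B: module_hom vscale vscale B
    using assms(1) by (simp add: vec_complex_def)
  have "B (A (basis_vec l)) = 0"
    using assms basis_vec_in_vecs_on[OF assms(2)] by (auto simp: vec_complex_def)
  then show ?thesis
    by (simp add: pivot_elim_def B.diff B.scale)
qed

lemma pivot_incoming_complex:
  assumes cx: "vec_complex J A I B" and l: "l \<in> J" and u: "u * A (basis_vec l) k = 1"
  shows "vec_complex J (\<lambda>w. pivot_elim u k (A (basis_vec l)) (A w)) (I - {k}) B"
proof -
  have "A (basis_vec l) \<in> vecs_on I"
    using cx basis_vec_in_vecs_on[OF l] by (auto simp: vec_complex_def)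
  then have "pivot_elim u k (A (basis_vec l)) (A w) \<in> vecs_on (I - {k})" if "w \<in> vecs_on J" for w
    using cx that pivot_elim_vecs_on[of u "A (basis_vec l)" k, OF u] by (simp add: vec_complex_def)
  moreover have "vec_linear (\<lambda>w. pivot_elim u k (A (basis_vec l)) (A w))"
    using cx by (intro vec_linear_comp[OF vec_linear_pivot_elim]) (simp add: vec_complex_def)
  ultimately show ?thesis
    using cx pivot_incoming_invisible[OF cx l] by (simp add: vec_complex_def)
qed

lemma pivot_incoming_residually_exact:
  assumes "residually_exact m J A I B"
  shows "residually_exact m J (\<lambda>w. pivot_elim u k (A (basis_vec l)) (A w)) (I - {k}) B"
  unfolding residually_exact_def
proof (intro ballI allI impI)
  let ?\<tau> = "pivot_elim u k (A (basis_vec l))"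
  fix v \<mu>
  assume v: "v \<in> vecs_on (I - {k})"
    and H: "vec_functional \<mu> \<and> (\<forall>k. B v k \<in> m) \<and> (\<forall>l'\<in>J. \<mu> (?\<tau> (A (basis_vec l'))) \<in> m)"
  have func: "vec_functional (\<lambda>x. \<mu> (?\<tau> x))"
    using H by (simp add: vec_functional_comp[OF _ vec_linear_pivot_elim])
  have "v \<in> vecs_on I"
    using v by (rule vecs_on_mono[rotated]) blast
  then have "\<mu> (?\<tau> v) \<in> m"
    using residually_exactD[OF assms _ func] H by simp
  moreover have "?\<tau> v = v"
    using v by (intro pivot_elim_id) (simp add: vecs_on_def)
  ultimately show "\<mu> v \<in> m"
    by simp
qed

lemma pivot_incoming_lift:
  assumes cx: "vec_complex J A I B" and l: "l \<in> J" and u: "u * A (basis_vec l) k = 1"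
    and "has_inner_inverse (I - {k}) B"
  shows "has_inner_inverse I B"
proof -
  obtain h where h: "vec_linear h" "\<And>y. h y \<in> vecs_on (I - {k})"
    "\<And>v. v \<in> vecs_on (I - {k}) \<Longrightarrow> B (h (B v)) = B v"
    using assms(4) unfolding has_inner_inverse_def by blast
  have \<alpha>: "A (basis_vec l) \<in> vecs_on I"
    using cx basis_vec_in_vecs_on[OF l] by (auto simp: vec_complex_def)
  have "B (h (B v)) = B v" if "v \<in> vecs_on I" for v
    using h(3)[OF pivot_elim_vecs_on[of u "A (basis_vec l)" k, OF u that \<alpha>]]
    unfolding pivot_incoming_invisible[OF cx l] .
  moreover have "h y \<in> vecs_on I" for y
    using h(2) by (rule vecs_on_mono[rotated]) blast
  ultimately show ?thesis
    unfolding has_inner_inverse_def using h(1) by blast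
qed

lemma pivot_outgoing_drop_coord:
  assumes "vec_linear B" "u * B (basis_vec i) k = 1"
  shows "pivot_elim u k (B (basis_vec i)) (B (pivot_elim 1 i (basis_vec i) x))
    = pivot_elim u k (B (basis_vec i)) (B x)"
proof -
  interpret B: module_hom vscale vscale B
    by (rule assms(1))
  interpret \<pi>: module_hom vscale vscale "pivot_elim u k (B (basis_vec i))"
    by (rule vec_linear_pivot_elim)
  show ?thesis
    using pivot_elim_pivot[of u "B (basis_vec i)" k, OF assms(2)]
    by (simp add: pivot_elim_def[of 1] B.diff B.scale \<pi>.diff \<pi>.scale)
qed

lemma pivot_outgoing_complex:
  assumes cx: "vec_complex J A I B" and i: "i \<in> I" and u: "u * B (basis_vec i) k = 1"
  shows "vec_complex J (\<lambda>w. pivot_elim 1 i (basis_vec i) (A w)) (I - {i})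
    (\<lambda>v. pivot_elim u k (B (basis_vec i)) (B v))"
proof -
  let ?\<pi> = "pivot_elim u k (B (basis_vec i))"
  let ?\<rho> = "pivot_elim 1 i (basis_vec i)"
  have lin: "vec_linear A" "vec_linear B"
    using cx by (simp_all add: vec_complex_def)
  have e_i: "1 * basis_vec i i = 1"
    by (simp add: basis_vec_def)
  have "?\<rho> (A w) \<in> vecs_on (I - {i}) \<and> ?\<pi> (B (?\<rho> (A w))) = 0" if "w \<in> vecs_on J" for w
  proof
    have Aw: "A w \<in> vecs_on I" "B (A w) = 0"
      using cx that by (auto simp: vec_complex_def)
    show "?\<rho> (A w) \<in> vecs_on (I - {i})"
      using pivot_elim_vecs_on[of 1 "basis_vec i" i, OF e_i Aw(1)] i
      by (simp add: basis_vec_in_vecs_on)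
    show "?\<pi> (B (?\<rho> (A w))) = 0"
      using Aw(2) unfolding pivot_outgoing_drop_coord[OF lin(2) u] by (simp add: pivot_elim_def fun_eq_iff)
  qed
  then show ?thesis
    using vec_linear_comp[OF vec_linear_pivot_elim lin(1)] vec_linear_comp[OF vec_linear_pivot_elim lin(2)]
    by (simp add: vec_complex_def)
qed

lemma pivot_outgoing_residually_exact:
  assumes "vec_linear B" "residually_exact m J A I B" "i \<in> I"
  shows "residually_exact m J (\<lambda>w. pivot_elim 1 i (basis_vec i) (A w)) (I - {i})
    (\<lambda>v. pivot_elim u k (B (basis_vec i)) (B v))"
  unfolding residually_exact_def
proof (intro ballI allI impI)
  let ?\<rho> = "pivot_elim 1 i (basis_vec i)"
  interpret B: module_hom vscale vscale B
    by (rule assms(1))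
  interpret \<rho>: module_hom vscale vscale ?\<rho>
    by (rule vec_linear_pivot_elim)
  fix v \<mu>
  assume v: "v \<in> vecs_on (I - {i})"
    and H: "vec_functional \<mu> \<and> (\<forall>k'. pivot_elim u k (B (basis_vec i)) (B v) k' \<in> m)
      \<and> (\<forall>l\<in>J. \<mu> (?\<rho> (A (basis_vec l))) \<in> m)"
  define v0 where "v0 = v - vscale (u * B v k) (basis_vec i)"
  have "v \<in> vecs_on I"
    using v by (rule vecs_on_mono[rotated]) blast
  then have v0: "v0 \<in> vecs_on I"
    unfolding v0_def by (intro vecs_on_diff vecs_on_vscale basis_vec_in_vecs_on assms(3))
  have "B v0 = pivot_elim u k (B (basis_vec i)) (B v)"
    by (simp add: v0_def pivot_elim_def B.diff B.scale)
  moreover have func: "vec_functional (\<lambda>x. \<mu> (?\<rho> x))"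
    using H by (simp add: vec_functional_comp[OF _ vec_linear_pivot_elim])
  ultimately have "\<mu> (?\<rho> v0) \<in> m"
    using residually_exactD[OF assms(2) v0 func] H by simp
  moreover have "?\<rho> v0 = v"
  proof -
    have \<rho>_v: "?\<rho> v = v"
      using v by (intro pivot_elim_id) (simp add: vecs_on_def)
    have \<rho>_e: "?\<rho> (basis_vec i) = 0"
      by (rule pivot_elim_pivot) (simp add: basis_vec_def)
    show ?thesis
      unfolding v0_def \<rho>.diff \<rho>.scale \<rho>_v \<rho>_e by simp
  qed
  ultimately show "\<mu> v \<in> m"
    by simp
qed

text \<open>Along the pivot \<open>\<beta> = B e_i\<close> the source splits as \<open>R e_i \<oplus> R^(I-{i})\<close> and the
  target as \<open>R \<beta> \<oplus> ker \<lambda>\<close>, \<open>\<lambda> y = u y_k\<close>; \<open>h\<close> inverts \<open>B\<close> between the first summands and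
  uses \<open>h'\<close>, corrected by \<open>\<sigma>\<close> to stay inside \<open>ker (\<lambda> \<circ> B)\<close>, on the second.\<close>
lemma pivot_outgoing_lift:
  assumes "vec_linear B" and i: "i \<in> I" and u: "u * B (basis_vec i) k = 1"
    and "has_inner_inverse (I - {i}) (\<lambda>v. pivot_elim u k (B (basis_vec i)) (B v))"
  shows "has_inner_inverse I B"
proof -
  let ?\<pi> = "pivot_elim u k (B (basis_vec i))"
  interpret B: module_hom vscale vscale B
    by (rule assms(1))
  obtain h' where h': "vec_linear h'" "\<And>y. h' y \<in> vecs_on (I - {i})"
    "\<And>v. v \<in> vecs_on (I - {i}) \<Longrightarrow> ?\<pi> (B (h' (?\<pi> (B v)))) = ?\<pi> (B v)"
    using assms(4) unfolding has_inner_inverse_def by blast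
  define \<sigma> where "\<sigma> w = w - vscale (u * B w k) (basis_vec i)" for w
  define h where "h y = vscale (u * y k) (basis_vec i) + \<sigma> (h' (?\<pi> y))" for y
  have coord: "vec_functional (\<lambda>y. u * y k)"
    by (simp add: vec_functional_iff algebra_simps)
  have "vec_linear \<sigma>"
    unfolding \<sigma>_def
    using vec_linear_diff[OF vec.module_hom_ident vec_linear_rank_one[OF vec_functional_comp[OF coord assms(1)]]]
    by simp
  then have "vec_linear h"
    unfolding h_def
    by (intro vec_linear_add vec_linear_rank_one[OF coord] vec_linear_comp[OF _ vec_linear_comp[OF h'(1)]]
        vec_linear_pivot_elim)
  moreover have "h y \<in> vecs_on I" for y
  proof -
    have "h' (?\<pi> y) \<in> vecs_on I"
      using h'(2) by (rule vecs_on_mono[rotated]) blast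
    then show ?thesis
      unfolding h_def \<sigma>_def by (intro vecs_on_add vecs_on_diff vecs_on_vscale basis_vec_in_vecs_on i)
  qed
  moreover have "B (h (B v)) = B v" if v: "v \<in> vecs_on I" for v
  proof -
    have "pivot_elim 1 i (basis_vec i) v \<in> vecs_on (I - {i})"
      using pivot_elim_vecs_on[of 1 "basis_vec i" i, OF _ v basis_vec_in_vecs_on[OF i]]
      by (simp add: basis_vec_def)
    then have "?\<pi> (B (h' (?\<pi> (B v)))) = ?\<pi> (B v)"
      using h'(3) pivot_outgoing_drop_coord[OF assms(1) u] by metis
    then have "B (\<sigma> (h' (?\<pi> (B v)))) = ?\<pi> (B v)"
      by (simp add: \<sigma>_def pivot_elim_def B.diff B.scale)
    then show ?thesis
      by (simp add: h_def B.add B.scale pivot_elim_def)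
  qed
  ultimately show ?thesis
    unfolding has_inner_inverse_def by blast
qed

text \<open>Gaussian elimination over the local ring: a unit entry in a column of \<open>B\<close> or of \<open>A\<close>
  splits off a trivial summand and lowers \<open>card I\<close>; when no unit entry is left, residual
  exactness forces \<open>I = {}\<close>.\<close>
theorem residually_exact_imp_has_inner_inverse:
  assumes "local_ring_max m" "finite I" "vec_complex J A I B" "residually_exact m J A I B"
  shows "has_inner_inverse I B"
  using assms(2-4)
proof (induction "card I" arbitrary: I A B rule: less_induct)
  case less
  consider (outgoing) i k where "i \<in> I" "B (basis_vec i) k \<notin> m"
    | (incoming) l k where "l \<in> J" "k \<in> I" "A (basis_vec l) k \<notin> m"
    | (residues_zero) "\<forall>i\<in>I. \<forall>k. B (basis_vec i) k \<in> m" "\<forall>l\<in>J. \<forall>k\<in>I. A (basis_vec l) k \<in> m"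
    by blast
  then show ?case
  proof cases
    case outgoing
    then obtain u where u: "u * B (basis_vec i) k = 1"
      using local_ring_max_unit[OF assms(1)] by blast
    have B: "vec_linear B"
      using less.prems(2) by (simp add: vec_complex_def)
    have "card (I - {i}) < card I"
      using less.prems(1) outgoing(1) by (rule card_Diff1_less)
    then have "has_inner_inverse (I - {i}) (\<lambda>v. pivot_elim u k (B (basis_vec i)) (B v))"
      using pivot_outgoing_complex[OF less.prems(2) outgoing(1) u]
        pivot_outgoing_residually_exact[OF B less.prems(3) outgoing(1)] less.prems(1)
      by (intro less.hyps) auto
    then show ?thesis
      by (rule pivot_outgoing_lift[OF B outgoing(1) u])
  next
    case incoming
    then obtain u where u: "u * A (basis_vec l) k = 1"
      using local_ring_max_unit[OF assms(1)] by blast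
    have "card (I - {k}) < card I"
      using less.prems(1) incoming(2) by (rule card_Diff1_less)
    then have "has_inner_inverse (I - {k}) B"
      using pivot_incoming_complex[OF less.prems(2) incoming(1) u]
        pivot_incoming_residually_exact[OF less.prems(3)] less.prems(1)
      by (intro less.hyps) auto
    then show ?thesis
      using pivot_incoming_lift[OF less.prems(2) incoming(1) u] by blast
  next
    case residues_zero
    then have "I = {}"
      using residually_exact_residues_zero[OF local_ring_max_one[OF assms(1)] less.prems(3)] by blast
    then show ?thesis
      using has_inner_inverse_empty by simp
  qed
qed

section \<open>Frobenius twists of matrices\<close>

definition mat_homology_zero ::
  "nat \<Rightarrow> nat \<Rightarrow> nat \<Rightarrow> (nat \<Rightarrow> nat \<Rightarrow> 'a::comm_ring_1) \<Rightarrow> (nat \<Rightarrow> nat \<Rightarrow> 'a) \<Rightarrow> bool" where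
  "mat_homology_zero n0 n1 n2 D D' \<longleftrightarrow>
    (\<forall>v\<in>vecs n1. mat_app n0 n1 D v = (\<lambda>_. 0) \<longrightarrow> (\<exists>w\<in>vecs n2. mat_app n1 n2 D' w = v))"

lemma frob_homology_zero_iff:
  "frob_homology_zero p r rk d j \<longleftrightarrow>
    mat_homology_zero (rk (j - 1)) (rk j) (rk (j + 1)) (frob_mat p r (d j)) (frob_mat p r (d (j + 1)))"
  by (simp add: frob_homology_zero_def mat_homology_zero_def)

lemma vec_linear_mat_app: "vec_linear (mat_app n0 n1 D)"
  by (simp add: vec_linear_iff mat_app_def fun_eq_iff sum.distrib sum_distrib_left algebra_simps)

lemma mat_app_in_vecs_on: "mat_app n0 n1 D v \<in> vecs_on {..<n0}"
  by (simp add: mat_app_def vecs_on_def)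

lemma mat_app_basis_vec: "l < n1 \<Longrightarrow> mat_app n0 n1 D (basis_vec l) = (\<lambda>i. if i < n0 then D i l else 0)"
  by (simp add: mat_app_def basis_vec_def fun_eq_iff if_distrib[of "(*) _"] cong: if_cong)

lemma mat_app_frob_mat:
  fixes D :: "nat \<Rightarrow> nat \<Rightarrow> 'a::comm_ring_1"
  assumes "prime p" "CHAR('a) = p"
  shows "mat_app n0 n1 (frob_mat p r D) (\<lambda>k. v k ^ p ^ r) = (\<lambda>i. mat_app n0 n1 D v i ^ p ^ r)"
  using assms prime_gt_0_nat[OF assms(1)]
  by (auto simp: mat_app_def frob_mat_def fun_eq_iff freshmans_dream_sum' power_mult_distrib power_0_left)

lemma vec_functional_mat_app_basis_vec:
  assumes "vec_functional \<mu>" "l < n2"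
  shows "\<mu> (mat_app n1 n2 D (basis_vec l)) = (\<Sum>i<n1. \<mu> (basis_vec i) * D i l)"
proof -
  have "\<mu> (mat_app n1 n2 D (basis_vec l)) = (\<Sum>i<n1. \<mu> (basis_vec i) * mat_app n1 n2 D (basis_vec l) i)"
    by (rule vec_functional_expansion[OF finite_lessThan assms(1) mat_app_in_vecs_on])
  also have "\<dots> = (\<Sum>i<n1. \<mu> (basis_vec i) * D i l)"
    by (rule sum.cong) (simp_all add: mat_app_basis_vec[OF assms(2)])
  finally show ?thesis .
qed

lemma frob_cycle_if_residual_cycle:
  fixes D :: "nat \<Rightarrow> nat \<Rightarrow> 'a::comm_ring_1"
  assumes p: "prime p" "CHAR('a) = p" and "ideal m" "x \<in> socle m"
    and Dv: "\<And>i. mat_app n0 n1 D v i \<in> m"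
  shows "mat_app n0 n1 (frob_mat p r D) (vscale x (\<lambda>k. v k ^ p ^ r)) = (\<lambda>_. 0)"
proof -
  have "0 < p ^ r"
    using prime_gt_0_nat[OF p(1)] by simp
  have "x * mat_app n0 n1 D v i ^ p ^ r = 0" for i
  proof -
    have "mat_app n0 n1 D v i ^ p ^ r \<in> m"
      using ideal_power_mono[OF assms(3) _ Suc_leI[OF \<open>0 < p ^ r\<close>]] Dv by simp
    then show ?thesis
      using assms(4) unfolding socle_def by (simp add: mult.commute[of x])
  qed
  then show ?thesis
    using mat_app_frob_mat[OF p, where D = D and v = v]
    by (simp add: module_hom.scale[OF vec_linear_mat_app] fun_eq_iff)
qed

lemma sum_power_mat_app_frob_mat:
  fixes D :: "nat \<Rightarrow> nat \<Rightarrow> 'a::comm_ring_1"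
  assumes "prime p" "CHAR('a) = p"
  shows "(\<Sum>i<n1. c i ^ p ^ r * mat_app n1 n2 (frob_mat p r D) W i)
    = (\<Sum>l<n2. W l * (\<Sum>i<n1. c i * D i l) ^ p ^ r)"
proof -
  have "(\<Sum>i<n1. c i ^ p ^ r * mat_app n1 n2 (frob_mat p r D) W i)
      = (\<Sum>i<n1. \<Sum>l<n2. W l * (c i ^ p ^ r * D i l ^ p ^ r))"
    by (simp add: mat_app_def frob_mat_def sum_distrib_left ac_simps)
  also have "\<dots> = (\<Sum>l<n2. W l * (\<Sum>i<n1. c i * D i l) ^ p ^ r)"
    using assms by (subst sum.swap) (simp add: freshmans_dream_sum' sum_distrib_left power_mult_distrib)
  finally show ?thesis .
qed

text \<open>Were \<open>\<mu> v\<close> a unit, the socle element \<open>x\<close> would lie in \<open>m ^ q\<close>, \<open>q = p ^ r\<close>: the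
  twisted cycle \<open>x v^[q]\<close> is a twisted boundary \<open>D'^[q] W\<close>, and applying the functional
  with coefficients \<open>(\<mu> e_i)^q\<close> gives \<open>x (\<mu> v)^q = \<Sum>l. W l (\<mu> (D' e_l))^q\<close>.\<close>
lemma residually_exact_if_frob_homology_zero:
  fixes D D' :: "nat \<Rightarrow> nat \<Rightarrow> 'a::comm_ring_1"
  assumes p: "prime p" "CHAR('a) = p" and m: "local_ring_max m"
    and x: "x \<in> socle m" "x \<notin> ideal_pow m (p ^ r)"
    and H: "mat_homology_zero n0 n1 n2 (frob_mat p r D) (frob_mat p r D')"
  shows "residually_exact m {..<n2} (mat_app n1 n2 D') {..<n1} (mat_app n0 n1 D)"
  unfolding residually_exact_def
proof (intro ballI allI impI)
  fix v \<mu>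
  assume v: "v \<in> vecs_on {..<n1}"
    and "vec_functional \<mu> \<and> (\<forall>i. mat_app n0 n1 D v i \<in> m)
      \<and> (\<forall>l\<in>{..<n2}. \<mu> (mat_app n1 n2 D' (basis_vec l)) \<in> m)"
  then have \<mu>: "vec_functional \<mu>" and Dv: "\<And>i. mat_app n0 n1 D v i \<in> m"
    and D'\<mu>: "\<And>l. l < n2 \<Longrightarrow> \<mu> (mat_app n1 n2 D' (basis_vec l)) \<in> m"
    by auto
  define q where "q = p ^ r"
  define c where "c i = \<mu> (basis_vec i)" for i
  have "vscale x (\<lambda>k. v k ^ q) \<in> vecs n1"
    using v prime_gt_0_nat[OF p(1)] by (simp add: q_def vecs_def vecs_on_def power_0_left)
  then obtain W where W: "mat_app n1 n2 (frob_mat p r D') W = vscale x (\<lambda>k. v k ^ q)"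
    using H frob_cycle_if_residual_cycle[OF p local_ring_max_ideal[OF m] x(1) Dv]
    unfolding mat_homology_zero_def q_def by blast
  have "x * \<mu> v ^ q = (\<Sum>i<n1. c i ^ q * mat_app n1 n2 (frob_mat p r D') W i)"
    using vec_functional_expansion[OF finite_lessThan \<mu> v] p
    by (simp add: W c_def q_def freshmans_dream_sum' sum_distrib_left power_mult_distrib ac_simps)
  also have "\<dots> = (\<Sum>l<n2. W l * \<mu> (mat_app n1 n2 D' (basis_vec l)) ^ q)"
    unfolding q_def sum_power_mat_app_frob_mat[OF p]
    by (rule sum.cong) (simp_all add: c_def vec_functional_mat_app_basis_vec[OF \<mu>])
  also have "\<dots> \<in> ideal_pow m q"
    using D'\<mu> by (intro ideal_sum[OF ideal_pow_ideal] ideal_mult_left[OF ideal_pow_ideal] power_mem_ideal_pow)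
      simp
  finally have x_\<mu>: "x * \<mu> v ^ q \<in> ideal_pow m q" .
  show "\<mu> v \<in> m"
  proof (rule ccontr)
    assume "\<mu> v \<notin> m"
    then obtain u where "u * \<mu> v = 1"
      using local_ring_max_unit[OF m] by blast
    then have "u ^ q * (x * \<mu> v ^ q) = x"
      by (metis (no_types, lifting) mult.left_commute mult_1_right power_mult_distrib power_one)
    then have "x \<in> ideal_pow m q"
      using ideal_mult_left[OF ideal_pow_ideal x_\<mu>] by metis
    then show False
      using x(2) by (simp add: q_def)
  qed
qed

lemma frob_homology_zero_if_rank_zero: "rk j = 0 \<Longrightarrow> frob_homology_zero p r rk d j"
  by (auto simp: frob_homology_zero_def vecs_def mat_app_def fun_eq_iff intro!: bexI[of _ 0])

lemma rank_zero_if_frob_homology_zero: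
  fixes d :: "int \<Rightarrow> nat \<Rightarrow> nat \<Rightarrow> 'a::comm_ring_1"
  assumes p: "prime p" "CHAR('a) = p" and m: "local_ring_max m"
    and x: "x \<in> socle m" "x \<notin> ideal_pow m (p ^ r)"
    and "minimal_complex m rk d" "frob_homology_zero p r rk d j"
  shows "rk j = 0"
proof -
  have "residually_exact m {..<rk (j + 1)} (mat_app (rk j) (rk (j + 1)) (d (j + 1)))
      {..<rk j} (mat_app (rk (j - 1)) (rk j) (d j))"
    using assms(7) unfolding frob_homology_zero_iff by (rule residually_exact_if_frob_homology_zero[OF p m x])
  moreover have "\<forall>i\<in>{..<rk j}. \<forall>k. mat_app (rk (j - 1)) (rk j) (d j) (basis_vec i) k \<in> m"
    using assms(6) ideal_0[OF local_ring_max_ideal[OF m]]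
    by (simp add: mat_app_basis_vec minimal_complex_def)
  moreover have "\<forall>l\<in>{..<rk (j + 1)}. \<forall>i\<in>{..<rk j}. mat_app (rk j) (rk (j + 1)) (d (j + 1)) (basis_vec l) i \<in> m"
    using assms(6) unfolding minimal_complex_def
    by (simp add: mat_app_basis_vec)
  ultimately have "{..<rk j} = {}"
    by (rule residually_exact_residues_zero[OF local_ring_max_one[OF m]])
  then show ?thesis
    by (metis lessThan_iff empty_iff neq0_conv)
qed

section \<open>Splitting a free resolution\<close>

lemma mem_max_if_annihilated:
  assumes "local_ring_max m" "x \<noteq> 0" "x * a = 0"
  shows "a \<in> m"
proof (rule ccontr)
  assume "a \<notin> m"
  then obtain u where "u * a = 1"
    using local_ring_max_unit[OF assms(1)] by blast
  then have "x = u * (x * a)"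
    by (metis mult.left_commute mult_1_right)
  then show False
    using assms(2,3) by simp
qed

text \<open>With \<open>h\<close> an inner inverse of \<open>d'\<close>, write \<open>v = w + d' (h v)\<close>. If \<open>d v\<close> vanishes
  modulo \<open>m\<close>, then \<open>x w\<close> is a cycle, hence a boundary, and it is also killed by the
  projection \<open>id - d' h\<close> onto a complement of the boundaries. So \<open>x w = 0\<close>, which forces
  every coordinate of \<open>w\<close> into \<open>m\<close>.\<close>
lemma residually_exact_if_split_exact:
  assumes m: "local_ring_max m" and x: "x \<in> socle m" "x \<noteq> 0"
    and fin: "finite I0" "finite I1" and cx: "vec_complex I1 d' I0 d"
    and exact: "\<And>v. v \<in> vecs_on I0 \<Longrightarrow> d v = 0 \<Longrightarrow> \<exists>w\<in>vecs_on I1. d' w = v"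
    and split: "has_inner_inverse I1 d'"
  shows "residually_exact m I1 d' I0 d"
  unfolding residually_exact_def
proof (intro ballI allI impI)
  fix v \<mu>
  assume v: "v \<in> vecs_on I0"
    and "vec_functional \<mu> \<and> (\<forall>k. d v k \<in> m) \<and> (\<forall>l\<in>I1. \<mu> (d' (basis_vec l)) \<in> m)"
  then have \<mu>: "vec_functional \<mu>" and dv: "\<And>k. d v k \<in> m"
    and \<mu>_d': "\<And>l. l \<in> I1 \<Longrightarrow> \<mu> (d' (basis_vec l)) \<in> m"
    by auto
  have lin: "vec_linear d" "vec_linear d'"
    and d'_maps: "\<And>w. w \<in> vecs_on I1 \<Longrightarrow> d' w \<in> vecs_on I0"
    and dd': "\<And>w. w \<in> vecs_on I1 \<Longrightarrow> d (d' w) = 0"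
    using cx by (auto simp: vec_complex_def)
  interpret d: module_hom vscale vscale d by (rule lin(1))
  interpret d': module_hom vscale vscale d' by (rule lin(2))
  obtain h where h: "vec_linear h" "\<And>y. h y \<in> vecs_on I1" "\<And>w. w \<in> vecs_on I1 \<Longrightarrow> d' (h (d' w)) = d' w"
    using split unfolding has_inner_inverse_def by blast
  interpret h: module_hom vscale vscale h by (rule h(1))
  define w where "w = v - d' (h v)"
  have w: "w \<in> vecs_on I0"
    unfolding w_def using v d'_maps[OF h(2)] by (rule vecs_on_diff)
  have "d (vscale x w) = 0"
    using dd'[OF h(2)] dv x(1) by (simp add: w_def d.diff d.scale fun_eq_iff socle_def mult.commute[of x])
  then obtain z where z: "z \<in> vecs_on I1" "d' z = vscale x w"
    using exact w vecs_on_vscale by blast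
  have "d' (h (vscale x w)) = 0"
    using h(3)[OF h(2)] by (simp add: w_def h.scale h.diff d'.scale d'.diff)
  then have "vscale x w = 0"
    using h(3)[OF z(1)] z(2) by simp
  then have "w k \<in> m" for k
    using mem_max_if_annihilated[OF m x(2)] by (metis vscale_apply zero_fun_def)
  then have "\<mu> w \<in> m"
    using vec_functional_expansion[OF fin(1) \<mu> w] local_ring_max_ideal[OF m]
    by (simp add: ideal_sum ideal_mult_left)
  moreover have "\<mu> (d' (h v)) \<in> m"
    using vec_functional_expansion[OF fin(2) vec_functional_comp[OF \<mu> lin(2)] h(2)]
      local_ring_max_ideal[OF m] \<mu>_d'
    by (simp add: ideal_sum ideal_mult_right)
  ultimately show "\<mu> v \<in> m"
    using ideal_add[OF local_ring_max_ideal[OF m]] module_hom.add[OF \<mu>]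
    by (metis diff_add_cancel w_def)
qed

lemma projective_if_linear_section:
  fixes smul :: "'a::comm_ring_1 \<Rightarrow> 'm::ab_group_add \<Rightarrow> 'm"
  assumes "module smul"
    and add: "\<And>x y. \<sigma> (x + y) = \<sigma> x + \<sigma> y" and scale: "\<And>a x. \<sigma> (smul a x) = vscale a (\<sigma> x)"
    and is_section: "\<And>x. (\<Sum>k<n. smul (\<sigma> x k) (g k)) = x"
  shows "projective_module smul"
proof -
  interpret M: module smul
    by fact
  define s where "s x y = (\<Sum>k\<in>{k \<in> {..<n}. g k = y}. \<sigma> x k)" for x y
  have supp: "{y. s x y \<noteq> 0} \<subseteq> g ` {..<n}" for x
  proof
    fix y assume "y \<in> {y. s x y \<noteq> 0}"
    then have y: "s x y \<noteq> 0"
      by simp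
    show "y \<in> g ` {..<n}"
    proof (rule ccontr)
      assume "y \<notin> g ` {..<n}"
      then have no_index: "{k \<in> {..<n}. g k = y} = {}"
        by blast
      show False
        using y unfolding s_def no_index by simp
    qed
  qed
  have "(\<Sum>y\<in>{y. s x y \<noteq> 0}. smul (s x y) y) = x" for x
  proof -
    have "(\<Sum>y\<in>{y. s x y \<noteq> 0}. smul (s x y) y) = (\<Sum>y\<in>g ` {..<n}. smul (s x y) y)"
      by (rule sum.mono_neutral_left) (simp_all add: supp)
    also have "\<dots> = (\<Sum>y\<in>g ` {..<n}. \<Sum>k\<in>{k \<in> {..<n}. g k = y}. smul (\<sigma> x k) (g k))"
      unfolding s_def M.scale_sum_left by (intro sum.cong refl) simp
    also have "\<dots> = (\<Sum>k<n. smul (\<sigma> x k) (g k))"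
      by (rule sum.group) (simp_all add: image_subset_iff)
    finally show ?thesis
      using is_section by simp
  qed
  moreover have "s (x + y) = (\<lambda>z. s x z + s y z)" "s (smul a x) = (\<lambda>y. a * s x y)" for a x y
    unfolding s_def add scale by (simp_all add: sum.distrib sum_distrib_left)
  moreover have "finite {y. s x y \<noteq> 0}" for x
    using supp by (rule finite_subset) simp
  ultimately show ?thesis
    unfolding projective_module_def by (intro exI[of _ s]) blast
qed

text \<open>An inner inverse \<open>h\<close> of \<open>d 1\<close> yields the idempotent \<open>id - d 1 \<circ> h\<close> on \<open>F_0\<close>, whose
  kernel is the image of \<open>d 1\<close>; composing it with any set-theoretic section of the
  augmentation gives an \<open>R\<close>-linear section.\<close>
lemma resolution_augmentation_section:
  fixes smul :: "'a::comm_ring_1 \<Rightarrow> 'm::ab_group_add \<Rightarrow> 'm"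
  assumes "module smul" "free_resolution smul rk d g"
    and "has_inner_inverse {..<rk 1} (mat_app (rk 0) (rk 1) (d 1))"
  obtains \<sigma> where "\<And>x y. \<sigma> (x + y) = \<sigma> x + \<sigma> y" "\<And>a x. \<sigma> (smul a x) = vscale a (\<sigma> x)"
    "\<And>x. (\<Sum>k<rk 0. smul (\<sigma> x k) (g k)) = x"
proof -
  interpret M: module smul
    by fact
  let ?D = "mat_app (rk 0) (rk 1) (d 1)"
  let ?F0 = "vecs_on {..<rk 0} :: (nat \<Rightarrow> 'a) set"
  define \<epsilon> where "\<epsilon> v = (\<Sum>k<rk 0. smul (v k) (g k))" for v
  have surj: "\<exists>v\<in>?F0. \<epsilon> v = x" for x
    using assms(2) unfolding free_resolution_def \<epsilon>_def vecs_eq_vecs_on by blast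
  have ker: "\<epsilon> v = 0 \<longleftrightarrow> (\<exists>w\<in>vecs_on {..<rk 1}. ?D w = v)" if "v \<in> ?F0" for v
    using assms(2) that unfolding free_resolution_def \<epsilon>_def vecs_eq_vecs_on by blast
  interpret \<epsilon>: module_hom vscale smul \<epsilon>
    by (simp add: module_hom_iff vec.module_axioms M.module_axioms \<epsilon>_def M.scale_left_distrib
        sum.distrib M.scale_sum_right M.scale_scale)
  obtain h where h: "vec_linear h" "\<And>y. h y \<in> vecs_on {..<rk 1}"
    "\<And>w. w \<in> vecs_on {..<rk 1} \<Longrightarrow> ?D (h (?D w)) = ?D w"
    using assms(3) unfolding has_inner_inverse_def by blast
  define e where "e v = v - ?D (h v)" for v
  interpret e: module_hom vscale vscale e
    unfolding e_def by (intro vec_linear_diff vec.module_hom_ident vec_linear_comp[OF vec_linear_mat_app h(1)])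
  have e_ker: "e v = 0" if "v \<in> ?F0" "\<epsilon> v = 0" for v
    using ker[OF that(1)] that(2) h(3) unfolding e_def by auto
  have \<epsilon>_e: "\<epsilon> (e v) = \<epsilon> v" for v
    using ker[OF mat_app_in_vecs_on] h(2) by (auto simp: e_def \<epsilon>.diff)
  define pre where "pre x = (SOME v. v \<in> ?F0 \<and> \<epsilon> v = x)" for x
  have pre: "pre x \<in> ?F0" "\<epsilon> (pre x) = x" for x
    using someI_ex[OF surj[of x, unfolded Bex_def]] unfolding pre_def by blast+
  show thesis
  proof (rule that[of "\<lambda>x. e (pre x)"])
    show "e (pre (x + y)) = e (pre x) + e (pre y)" for x y
      using e_ker[of "pre (x + y) - pre x - pre y"] pre
      by (simp add: vecs_on_diff e.diff \<epsilon>.diff diff_eq_eq add_ac)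
    show "e (pre (smul a x)) = vscale a (e (pre x))" for a x
      using e_ker[of "pre (smul a x) - vscale a (pre x)"] pre
      by (simp add: vecs_on_diff vecs_on_vscale e.diff e.scale \<epsilon>.diff \<epsilon>.scale)
    show "(\<Sum>k<rk 0. smul (e (pre x) k) (g k)) = x" for x
      using \<epsilon>_e pre(2) unfolding \<epsilon>_def by simp
  qed
qed

lemma has_inner_inverse_descends:
  fixes D :: "nat \<Rightarrow> (nat \<Rightarrow> 'a::comm_ring_1) \<Rightarrow> nat \<Rightarrow> 'a" and m :: "'a set"
  assumes m: "local_ring_max m" and x: "x \<in> socle m" "x \<noteq> 0"
    and complex: "\<And>i. 1 \<le> i \<Longrightarrow> vec_complex {..<rk (Suc i)} (D (Suc i)) {..<rk i} (D i)"
    and exact: "\<And>i v. 1 \<le> i \<Longrightarrow> v \<in> vecs_on {..<rk i} \<Longrightarrow> D i v = 0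
      \<Longrightarrow> \<exists>w\<in>vecs_on {..<rk (Suc i)}. D (Suc i) w = v"
    and "has_inner_inverse {..<rk j} (D j)" "1 \<le> i" "i \<le> j"
  shows "has_inner_inverse {..<rk i} (D i)"
  using assms(8)
proof (induction i rule: inc_induct)
  case base
  show ?case
    by (rule assms(6))
next
  case (step n)
  then have "1 \<le> n"
    using assms(7) by simp
  have "residually_exact m {..<rk (Suc n)} (D (Suc n)) {..<rk n} (D n)"
    using exact[OF \<open>1 \<le> n\<close>] step.IH
    by (intro residually_exact_if_split_exact[OF m x finite_lessThan finite_lessThan
        complex[OF \<open>1 \<le> n\<close>]]) blast+
  then show ?case
    by (rule residually_exact_imp_has_inner_inverse[OF m finite_lessThan complex[OF \<open>1 \<le> n\<close>]])
qed

lemma projective_if_tor_frob_zero: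
  fixes smul :: "'a::comm_ring_1 \<Rightarrow> 'm::ab_group_add \<Rightarrow> 'm" and m :: "'a set"
  assumes p: "prime p" "CHAR('a) = p" and m: "local_ring_max m"
    and x: "x \<in> socle m" "x \<notin> ideal_pow m (p ^ r)"
    and M: "module smul" and j: "1 \<le> j" and tor: "tor_frob_zero smul p r j"
  shows "projective_module smul"
proof -
  obtain rk d g where res: "free_resolution smul rk d g"
    and H: "mat_homology_zero (rk (j - 1)) (rk j) (rk (j + 1)) (frob_mat p r (d j)) (frob_mat p r (d (j + 1)))"
    using tor unfolding tor_frob_zero_def mat_homology_zero_def by blast
  define D where "D i = mat_app (rk (i - 1)) (rk i) (d i)" for i
  have exact: "D i v = 0 \<longleftrightarrow> (\<exists>w\<in>vecs_on {..<rk (Suc i)}. D (Suc i) w = v)"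
    if "1 \<le> i" "v \<in> vecs_on {..<rk i}" for i v
    using res that unfolding free_resolution_def D_def vecs_eq_vecs_on zero_fun_def by simp
  have complex: "vec_complex {..<rk (Suc i)} (D (Suc i)) {..<rk i} (D i)" if "1 \<le> i" for i
    using exact[OF that mat_app_in_vecs_on] vec_linear_mat_app mat_app_in_vecs_on
    unfolding vec_complex_def D_def by auto
  have "x \<noteq> 0"
    using x(2) ideal_0[OF ideal_pow_ideal] by blast
  have "has_inner_inverse {..<rk j} (D j)"
    using residually_exact_if_frob_homology_zero[OF p m x H] complex[OF j]
    by (intro residually_exact_imp_has_inner_inverse[OF m finite_lessThan]) (simp_all add: D_def)
  then have "has_inner_inverse {..<rk 1} (D 1)"
    using has_inner_inverse_descends[where D = D and rk = rk, OF m x(1) \<open>x \<noteq> 0\<close> complex] exact j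
    by blast
  then have "has_inner_inverse {..<rk 1} (mat_app (rk 0) (rk 1) (d 1))"
    by (simp add: D_def)
  then show ?thesis
    by (rule resolution_augmentation_section[OF M res]) (rule projective_if_linear_section[OF M])
qed

theorem proposition1p3:
  fixes m :: "'a::comm_ring_1 set" and p :: nat
  assumes "noetherian_ring TYPE('a)"
    and "local_ring_max m"
    and "prime p" and "CHAR('a) = p"
    and "depth_zero m"
  shows "(\<forall>(rk :: int \<Rightarrow> nat) (d :: int \<Rightarrow> nat \<Rightarrow> nat \<Rightarrow> 'a) (r :: nat) (j :: int).
            free_complex rk d \<and> minimal_complex m rk d \<and> real r > log (real p) (real (cR m)) \<longrightarrow>
            (frob_homology_zero p r rk d j \<longleftrightarrow> rk j = 0))
       \<and> (\<forall>(smul :: 'a \<Rightarrow> 'm::ab_group_add \<Rightarrow> 'm) (r :: nat) (j :: nat).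
            fin_gen_module smul \<and> j \<ge> 1 \<and> real r > log (real p) (real (cR m)) \<and>
            tor_frob_zero smul p r j \<longrightarrow> projective_module smul)"
proof (intro conjI allI impI)
  fix rk d r j
  assume H: "free_complex rk d \<and> minimal_complex m rk d \<and> real r > log (real p) (real (cR m))"
  then obtain x where "x \<in> socle m" "x \<notin> ideal_pow m (p ^ r)"
    using frobenius_socle_witness[OF assms(1,2,5,3)] by blast
  then show "frob_homology_zero p r rk d j \<longleftrightarrow> rk j = 0"
    using rank_zero_if_frob_homology_zero[OF assms(3,4,2)] frob_homology_zero_if_rank_zero H
    by blast
next
  fix smul :: "'a \<Rightarrow> 'm \<Rightarrow> 'm" and r j
  assume H: "fin_gen_module smul \<and> j \<ge> 1 \<and> real r > log (real p) (real (cR m)) \<and> tor_frob_zero smul p r j"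
  then obtain x where "x \<in> socle m" "x \<notin> ideal_pow m (p ^ r)"
    using frobenius_socle_witness[OF assms(1,2,5,3)] by blast
  then show "projective_module smul"
    using projective_if_tor_frob_zero[OF assms(3,4,2)] H by (auto simp: fin_gen_module_def)
qed

end
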